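(* Let $G$ be a Polish group, $d$, $G_0$, $\mathcal L(G,d)$ and $X\subseteq \mathcal L(G,d)^{\mathbb Q^{<\mathbb N}}$ as in the context. Then $X$ is invariant under the action of $G$: if $\vec f\in X$ and $g\in G$ then $g\cdot\vec f\in X$.
   Context: Let $G$ be a Polish group, $d$ a compatible right-invariant metric on $G$ (i.e. $d(g_0h,g_1h)=d(g_0,g_1)$) bounded by $1$, and $G_0$ a countable dense subgroup of $G$. Let $\mathcal L(G,d)$ be the set of functions $f:G\to[0,1]$ with $|f(g_1)-f(g_2)|\le d(g_1,g_2)$ for all $g_1,g_2$. Let $\mathbb Q^{<\mathbb N}$ be the set of finite sequences of rationals; for $s\in\mathbb Q^{<\mathbb N}$ and rationals $a_1,\dots,a_k$, $sa_1\dots a_k$ denotes the sequence $s$ followed by $a_1,\dots,a_k$ (natural numbers are regarded as rationals). Elements of $\mathcal L(G,d)^{\mathbb Q^{<\mathbb N}}$ are families $\vec f=(f_s)_{s\in\mathbb Q^{<\mathbb N}}$, and $G$ acts by $(g\cdot\vec f)_s(g_0)=f_s(g_0g)$. Let $X$ be the set of $\vec f\in\mathcal L(G,d)^{\mathbb Q^{<\mathbb N}}$ such that, writing $t=sq_0q_1q_2\,0\,m\,n$ and $u=sq_0q_1q_2\,1\,m\,n$: (1) for all $s\in\mathbb Q^{<\mathbb N}$, $g_0\in G_0$, $m,n\in\mathbb N$, $q_0,q_1,q_2,\epsilon\in\mathbb Q\cap(0,1)$ with $0<q_i\pm\epsilon<1$ ($i=0,1,2$): $f_t(g_0)<q_1-\epsilon$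 or $f_s(g_0)\le q_0+\epsilon$; (2) for the same range of parameters: $f_u(g_0)\ge q_2+\epsilon$ or $f_t(g_0)\ge q_1-\epsilon$; (3) for all $s\in\mathbb Q^{<\mathbb N}$, $g_0\in G_0$, $q_0,\epsilon\in\mathbb Q\cap(0,1)$: if $f_s(g_0)<q_0$ then there are $q_1,q_2\in\mathbb Q$, $g_1\in G_0$, $m,n\in\mathbb N$ with $0<q_2<q_1<q_0<1$, $d(g_0,g_1)<\epsilon$, and $f_u(g_1)<q_2$ where $u=sq_0q_1q_2\,1\,m\,n$. *)

theory Defs
  imports "HOL-Analysis.Analysis" "HOL-Algebra.Group"
begin

definition Polish_group_metric :: "('a, 'b) monoid_scheme \<Rightarrow> ('a \<Rightarrow> 'a \<Rightarrow> real) \<Rightarrow> bool" where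
  "Polish_group_metric G d \<longleftrightarrow>
     group G \<and> Metric_space (carrier G) d \<and>
     (let T = Metric_space.mtopology (carrier G) d in
        separable_space T \<and> completely_metrizable_space T \<and>
        continuous_map (prod_topology T T) T (\<lambda>(x, y). x \<otimes>\<^bsub>G\<^esub> y) \<and>
        continuous_map T T (\<lambda>x. inv\<^bsub>G\<^esub> x))"

definition right_invariant :: "('a, 'b) monoid_scheme \<Rightarrow> ('a \<Rightarrow> 'a \<Rightarrow> real) \<Rightarrow> bool" where
  "right_invariant G d \<longleftrightarrow>
     (\<forall>g0\<in>carrier G. \<forall>g1\<in>carrier G. \<forall>h\<in>carrier G.
        d (g0 \<otimes>\<^bsub>G\<^esub> h) (g1 \<otimes>\<^bsub>G\<^esub> h) = d g0 g1)"

definition bounded_by_one :: "('a, 'b) monoid_scheme \<Rightarrow> ('a \<Rightarrow> 'a \<Rightarrow> real) \<Rightarrow> bool" where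
  "bounded_by_one G d \<longleftrightarrow> (\<forall>x\<in>carrier G. \<forall>y\<in>carrier G. d x y \<le> 1)"

definition countable_dense_subgroup ::
  "('a, 'b) monoid_scheme \<Rightarrow> ('a \<Rightarrow> 'a \<Rightarrow> real) \<Rightarrow> 'a set \<Rightarrow> bool" where
  "countable_dense_subgroup G d G0 \<longleftrightarrow>
     subgroup G0 G \<and> countable G0 \<and>
     (Metric_space.mtopology (carrier G) d) closure_of G0 = carrier G"

text \<open>\<open>\<L>(G,d)\<close>: 1-Lipschitz functions G \<rightarrow> [0,1] (only values on the carrier matter).\<close>
definition Lip1 :: "('a, 'b) monoid_scheme \<Rightarrow> ('a \<Rightarrow> 'a \<Rightarrow> real) \<Rightarrow> ('a \<Rightarrow> real) \<Rightarrow> bool" where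
  "Lip1 G d f \<longleftrightarrow>
     (\<forall>x\<in>carrier G. 0 \<le> f x \<and> f x \<le> 1) \<and>
     (\<forall>x\<in>carrier G. \<forall>y\<in>carrier G. \<bar>f x - f y\<bar> \<le> d x y)"

definition gact :: "('a, 'b) monoid_scheme \<Rightarrow> 'a \<Rightarrow> (rat list \<Rightarrow> 'a \<Rightarrow> real) \<Rightarrow> (rat list \<Rightarrow> 'a \<Rightarrow> real)" where
  "gact G g F = (\<lambda>s x. F s (x \<otimes>\<^bsub>G\<^esub> g))"

definition Xset :: "('a, 'b) monoid_scheme \<Rightarrow> ('a \<Rightarrow> 'a \<Rightarrow> real) \<Rightarrow> 'a set \<Rightarrow> (rat list \<Rightarrow> 'a \<Rightarrow> real) set" where
  "Xset G d G0 = {F.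
     (\<forall>s. Lip1 G d (F s)) \<and>
     (\<forall>s. \<forall>g0\<in>G0. \<forall>m n :: nat. \<forall>q0 q1 q2 \<epsilon> :: rat.
        q0 \<in> {0<..<1} \<and> q1 \<in> {0<..<1} \<and> q2 \<in> {0<..<1} \<and> \<epsilon> \<in> {0<..<1} \<and>
        (\<forall>q\<in>{q0, q1, q2}. 0 < q - \<epsilon> \<and> q - \<epsilon> < 1 \<and> 0 < q + \<epsilon> \<and> q + \<epsilon> < 1) \<longrightarrow>
          (F (s @ [q0, q1, q2, 0, of_nat m, of_nat n]) g0 < of_rat (q1 - \<epsilon>) \<or>
           F s g0 \<le> of_rat (q0 + \<epsilon>))) \<and>
     (\<forall>s. \<forall>g0\<in>G0. \<forall>m n :: nat. \<forall>q0 q1 q2 \<epsilon> :: rat.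
        q0 \<in> {0<..<1} \<and> q1 \<in> {0<..<1} \<and> q2 \<in> {0<..<1} \<and> \<epsilon> \<in> {0<..<1} \<and>
        (\<forall>q\<in>{q0, q1, q2}. 0 < q - \<epsilon> \<and> q - \<epsilon> < 1 \<and> 0 < q + \<epsilon> \<and> q + \<epsilon> < 1) \<longrightarrow>
          (F (s @ [q0, q1, q2, 1, of_nat m, of_nat n]) g0 \<ge> of_rat (q2 + \<epsilon>) \<or>
           F (s @ [q0, q1, q2, 0, of_nat m, of_nat n]) g0 \<ge> of_rat (q1 - \<epsilon>))) \<and>
     (\<forall>s. \<forall>g0\<in>G0. \<forall>q0 \<epsilon> :: rat.
        q0 \<in> {0<..<1} \<and> \<epsilon> \<in> {0<..<1} \<and> F s g0 < of_rat q0 \<longrightarrow>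
          (\<exists>q1 q2 :: rat. \<exists>g1\<in>G0. \<exists>m n :: nat.
             0 < q2 \<and> q2 < q1 \<and> q1 < q0 \<and> q0 < 1 \<and> d g0 g1 < of_rat \<epsilon> \<and>
             F (s @ [q0, q1, q2, 1, of_nat m, of_nat n]) g1 < of_rat q2))}"

end

theory Submission
  imports Defs
begin

text \<open>Conditions (1) and (2) are closed conditions in the point \<open>g\<^sub>0\<close>, and condition (3)
  survives small perturbations of both the point and the witness, because all \<open>f\<^sub>s\<close> are
  1-Lipschitz. Hence a family satisfying them on the dense set \<open>G\<^sub>0\<close> satisfies them at every
  point of \<open>G\<close>, with witnesses in any dense set. Right translation by \<open>g\<close> is an isometry of
  \<open>d\<close>, so it maps \<open>G\<^sub>0\<close> onto the dense set \<open>G\<^sub>0 g\<close>, and the conditions for \<open>g \<cdot> f\<close> on \<open>G\<^sub>0\<close>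
  are exactly those for \<open>f\<close> on \<open>G\<^sub>0 g\<close>.\<close>

definition mdense_in :: "('a \<Rightarrow> 'a \<Rightarrow> real) \<Rightarrow> 'a set \<Rightarrow> 'a set \<Rightarrow> bool" where
  "mdense_in d S D \<longleftrightarrow> (\<forall>x\<in>S. \<forall>r>0. \<exists>y\<in>D. d x y < r)"

definition admissible :: "rat \<Rightarrow> rat \<Rightarrow> rat \<Rightarrow> rat \<Rightarrow> bool" where
  "admissible q0 q1 q2 \<epsilon> \<longleftrightarrow>
     q0 \<in> {0<..<1} \<and> q1 \<in> {0<..<1} \<and> q2 \<in> {0<..<1} \<and> \<epsilon> \<in> {0<..<1} \<and>
     (\<forall>q\<in>{q0, q1, q2}. 0 < q - \<epsilon> \<and> q - \<epsilon> < 1 \<and> 0 < q + \<epsilon> \<and> q + \<epsilon> < 1)"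

definition X_cond1 :: "(rat list \<Rightarrow> 'a \<Rightarrow> real) \<Rightarrow> 'a set \<Rightarrow> bool" where
  "X_cond1 F P \<longleftrightarrow>
     (\<forall>s. \<forall>g0\<in>P. \<forall>m n :: nat. \<forall>q0 q1 q2 \<epsilon>. admissible q0 q1 q2 \<epsilon> \<longrightarrow>
        F (s @ [q0, q1, q2, 0, of_nat m, of_nat n]) g0 < of_rat (q1 - \<epsilon>) \<or>
        F s g0 \<le> of_rat (q0 + \<epsilon>))"

definition X_cond2 :: "(rat list \<Rightarrow> 'a \<Rightarrow> real) \<Rightarrow> 'a set \<Rightarrow> bool" where
  "X_cond2 F P \<longleftrightarrow>
     (\<forall>s. \<forall>g0\<in>P. \<forall>m n :: nat. \<forall>q0 q1 q2 \<epsilon>. admissible q0 q1 q2 \<epsilon> \<longrightarrow>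
        F (s @ [q0, q1, q2, 1, of_nat m, of_nat n]) g0 \<ge> of_rat (q2 + \<epsilon>) \<or>
        F (s @ [q0, q1, q2, 0, of_nat m, of_nat n]) g0 \<ge> of_rat (q1 - \<epsilon>))"

definition X_cond3 :: "('a \<Rightarrow> 'a \<Rightarrow> real) \<Rightarrow> (rat list \<Rightarrow> 'a \<Rightarrow> real) \<Rightarrow> 'a set \<Rightarrow> 'a set \<Rightarrow> bool" where
  "X_cond3 d F P W \<longleftrightarrow>
     (\<forall>s. \<forall>g0\<in>P. \<forall>q0 \<epsilon> :: rat.
        q0 \<in> {0<..<1} \<and> \<epsilon> \<in> {0<..<1} \<and> F s g0 < of_rat q0 \<longrightarrow>
          (\<exists>q1 q2 :: rat. \<exists>g1\<in>W. \<exists>m n :: nat.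
             0 < q2 \<and> q2 < q1 \<and> q1 < q0 \<and> q0 < 1 \<and> d g0 g1 < of_rat \<epsilon> \<and>
             F (s @ [q0, q1, q2, 1, of_nat m, of_nat n]) g1 < of_rat q2))"

lemma Xset_eq:
  "Xset G d G0 =
     {F. (\<forall>s. Lip1 G d (F s)) \<and> X_cond1 F G0 \<and> X_cond2 F G0 \<and> X_cond3 d F G0 G0}"
  unfolding Xset_def X_cond1_def X_cond2_def X_cond3_def admissible_def by simp

lemma admissible_enlarge:
  fixes a :: real
  assumes "admissible q0 q1 q2 \<epsilon>" and "0 < a"
  shows "\<exists>\<eta>. 0 < \<eta> \<and> of_rat \<eta> < a \<and> admissible q0 q1 q2 (\<epsilon> + \<eta>)"
proof -
  define \<delta> where "\<delta> = Min {q0 - \<epsilon>, q1 - \<epsilon>, q2 - \<epsilon>, 1 - q0 - \<epsilon>, 1 - q1 - \<epsilon>, 1 - q2 - \<epsilon>}"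
  have "0 < \<delta>"
    using assms(1) unfolding \<delta>_def admissible_def by simp
  then obtain \<eta> where "(0::real) < of_rat \<eta>" "of_rat \<eta> < min a (of_rat \<delta>)"
    using of_rat_dense[of 0 "min a (of_rat \<delta>)"] assms(2) by auto
  then have "0 < \<eta>" "of_rat \<eta> < a" "\<eta> < \<delta>"
    by (simp_all add: of_rat_less)
  moreover have "admissible q0 q1 q2 (\<epsilon> + \<eta>)"
    using assms(1) \<open>0 < \<eta>\<close> \<open>\<eta> < \<delta>\<close> unfolding admissible_def \<delta>_def by auto
  ultimately show ?thesis by blast
qed

lemma countable_dense_subgroup_mdense_in:
  assumes "countable_dense_subgroup G d G0" and "Metric_space (carrier G) d"
  shows "mdense_in d (carrier G) G0"
  unfolding mdense_in_def
proof (intro ballI allI impI)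
  fix h and r :: real
  assume "h \<in> carrier G" "0 < r"
  then have "h \<in> Metric_space.mtopology (carrier G) d closure_of G0"
    using assms(1) unfolding countable_dense_subgroup_def by simp
  then obtain y where "y \<in> G0" "y \<in> Metric_space.mball (carrier G) d h r"
    using Metric_space.metric_closure_of[OF assms(2)] \<open>0 < r\<close> by blast
  then show "\<exists>y\<in>G0. d h y < r"
    using Metric_space.in_mball[OF assms(2)] by blast
qed

lemma mdense_in_right_translate:
  assumes "group G" and "right_invariant G d" and "g \<in> carrier G"
    and "mdense_in d (carrier G) D" and "D \<subseteq> carrier G"
  shows "mdense_in d (carrier G) ((\<lambda>x. x \<otimes>\<^bsub>G\<^esub> g) ` D)"
  unfolding mdense_in_def
proof (intro ballI allI impI)
  interpret group G by fact
  fix h and r :: real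
  assume "h \<in> carrier G" "0 < r"
  then have hg: "h \<otimes>\<^bsub>G\<^esub> inv\<^bsub>G\<^esub> g \<in> carrier G"
    using assms(3) by simp
  then obtain x where "x \<in> D" "d (h \<otimes>\<^bsub>G\<^esub> inv\<^bsub>G\<^esub> g) x < r"
    using assms(4) \<open>0 < r\<close> unfolding mdense_in_def by blast
  moreover have "d (h \<otimes>\<^bsub>G\<^esub> inv\<^bsub>G\<^esub> g) x = d h (x \<otimes>\<^bsub>G\<^esub> g)"
    using assms \<open>x \<in> D\<close> \<open>h \<in> carrier G\<close> hg unfolding right_invariant_def
    by (metis group.inv_solve_right' subsetD)
  ultimately show "\<exists>y\<in>(\<lambda>x. x \<otimes>\<^bsub>G\<^esub> g) ` D. d h y < r" by auto
qed

lemma Lip1_right_translate: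
  assumes "group G" and "right_invariant G d" and "g \<in> carrier G" and "Lip1 G d f"
  shows "Lip1 G d (\<lambda>x. f (x \<otimes>\<^bsub>G\<^esub> g))"
  using assms unfolding Lip1_def right_invariant_def by (metis group.is_monoid monoid.m_closed)

lemma X_cond1_extend:
  assumes Lip: "\<And>s. Lip1 G d (F s)"
    and "D \<subseteq> carrier G" and "mdense_in d (carrier G) D" and "X_cond1 F D"
    and "P \<subseteq> carrier G"
  shows "X_cond1 F P"
  unfolding X_cond1_def
proof (intro allI ballI impI)
  fix s h m n q0 q1 q2 \<epsilon>
  assume "h \<in> P" and adm: "admissible q0 q1 q2 \<epsilon>"
  define t where "t = s @ [q0, q1, q2, 0, of_nat m, of_nat n]"
  show "F t h < of_rat (q1 - \<epsilon>) \<or> F s h \<le> of_rat (q0 + \<epsilon>)"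
  proof (rule disjCI)
    assume "\<not> F s h \<le> of_rat (q0 + \<epsilon>)"
    \<comment> \<open>Apply (1) at a point of \<open>D\<close> within \<open>\<eta>\<close> of \<open>h\<close>, with the slack \<open>\<epsilon> + \<eta>\<close>.\<close>
    then obtain \<eta> where "0 < \<eta>" and \<eta>: "of_rat \<eta> < (F s h - of_rat (q0 + \<epsilon>)) / 2"
      and adm': "admissible q0 q1 q2 (\<epsilon> + \<eta>)"
      using admissible_enlarge[OF adm, of "(F s h - of_rat (q0 + \<epsilon>)) / 2"] by auto
    obtain h' where "h' \<in> D" and close: "d h h' < of_rat \<eta>"
      using assms(3,5) \<open>h \<in> P\<close> \<open>0 < \<eta>\<close> unfolding mdense_in_def
      by (meson subsetD zero_less_of_rat_iff)
    have "\<bar>F s h - F s h'\<bar> \<le> d h h'" "\<bar>F t h - F t h'\<bar> \<le> d h h'"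
      using Lip assms(2,5) \<open>h \<in> P\<close> \<open>h' \<in> D\<close> unfolding Lip1_def by blast+
    then have "\<not> F s h' \<le> of_rat (q0 + (\<epsilon> + \<eta>))"
      using \<eta> close by (simp add: of_rat_add)
    then have "F t h' < of_rat (q1 - (\<epsilon> + \<eta>))"
      using assms(4) \<open>h' \<in> D\<close> adm' unfolding X_cond1_def t_def by blast
    then show "F t h < of_rat (q1 - \<epsilon>)"
      using \<open>\<bar>F t h - F t h'\<bar> \<le> d h h'\<close> close by (simp add: of_rat_diff of_rat_add)
  qed
qed

lemma X_cond2_extend:
  assumes Lip: "\<And>s. Lip1 G d (F s)"
    and "D \<subseteq> carrier G" and "mdense_in d (carrier G) D" and "X_cond2 F D"
    and "P \<subseteq> carrier G"
  shows "X_cond2 F P"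
  unfolding X_cond2_def
proof (intro allI ballI impI)
  fix s h m n q0 q1 q2 \<epsilon>
  assume "h \<in> P" and adm: "admissible q0 q1 q2 \<epsilon>"
  define t where "t = s @ [q0, q1, q2, 0, of_nat m, of_nat n]"
  define u where "u = s @ [q0, q1, q2, 1, of_nat m, of_nat n]"
  show "F u h \<ge> of_rat (q2 + \<epsilon>) \<or> F t h \<ge> of_rat (q1 - \<epsilon>)"
  proof (rule ccontr)
    assume "\<not> ?thesis"
    then have "0 < min (of_rat (q2 + \<epsilon>) - F u h) (of_rat (q1 - \<epsilon>) - F t h)"
      by simp
    then obtain h' where "h' \<in> D"
      and close: "d h h' < min (of_rat (q2 + \<epsilon>) - F u h) (of_rat (q1 - \<epsilon>) - F t h)"
      using assms(3,5) \<open>h \<in> P\<close> unfolding mdense_in_def by blast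
    have "\<bar>F u h - F u h'\<bar> \<le> d h h'" "\<bar>F t h - F t h'\<bar> \<le> d h h'"
      using Lip assms(2,5) \<open>h \<in> P\<close> \<open>h' \<in> D\<close> unfolding Lip1_def by blast+
    moreover have "F u h' \<ge> of_rat (q2 + \<epsilon>) \<or> F t h' \<ge> of_rat (q1 - \<epsilon>)"
      using assms(4) \<open>h' \<in> D\<close> adm unfolding X_cond2_def t_def u_def by blast
    ultimately show False
      using close by auto
  qed
qed

lemma X_cond3_extend:
  assumes "Metric_space (carrier G) d" and Lip: "\<And>s. Lip1 G d (F s)"
    and "D \<subseteq> carrier G" and "mdense_in d (carrier G) D" and "X_cond3 d F D D"
    and "W \<subseteq> carrier G" and "mdense_in d (carrier G) W"
    and "P \<subseteq> carrier G"
  shows "X_cond3 d F P W"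
  unfolding X_cond3_def
proof (intro allI ballI impI)
  fix s h and q0 \<epsilon> :: rat
  assume "h \<in> P" and hyp: "q0 \<in> {0<..<1} \<and> \<epsilon> \<in> {0<..<1} \<and> F s h < of_rat q0"
  have "(0::real) < of_rat \<epsilon> / 3"
    using hyp by simp
  then obtain h' where "h' \<in> D" and hh': "d h h' < min (of_rat q0 - F s h) (of_rat \<epsilon> / 3)"
    using assms(4,8) \<open>h \<in> P\<close> hyp unfolding mdense_in_def by (metis diff_gt_0_iff_gt min_less_iff_conj subsetD)
  have "\<bar>F s h - F s h'\<bar> \<le> d h h'"
    using Lip assms(3,8) \<open>h \<in> P\<close> \<open>h' \<in> D\<close> unfolding Lip1_def by blast
  then have "F s h' < of_rat q0"
    using hh' by auto
  moreover have "\<epsilon> / 3 \<in> {0<..<1}"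
    using hyp by simp
  ultimately obtain q1 q2 g1' m n where "g1' \<in> D" and q: "0 < q2" "q2 < q1" "q1 < q0" "q0 < 1"
    and h'g1': "d h' g1' < of_rat (\<epsilon> / 3)"
    and low: "F (s @ [q0, q1, q2, 1, of_nat m, of_nat n]) g1' < of_rat q2"
    using assms(5) \<open>h' \<in> D\<close> hyp unfolding X_cond3_def by blast
  define u where "u = s @ [q0, q1, q2, 1, of_nat m, of_nat n]"
  have "0 < min (of_rat q2 - F u g1') (of_rat \<epsilon> / 3)"
    using low \<open>0 < of_rat \<epsilon> / 3\<close> unfolding u_def by simp
  then obtain g1 where "g1 \<in> W" and g1'g1: "d g1' g1 < min (of_rat q2 - F u g1') (of_rat \<epsilon> / 3)"
    using assms(7,3) \<open>g1' \<in> D\<close> unfolding mdense_in_def by blast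
  have "\<bar>F u g1' - F u g1\<bar> \<le> d g1' g1"
    using Lip assms(3,6) \<open>g1 \<in> W\<close> \<open>g1' \<in> D\<close> unfolding Lip1_def by blast
  then have "F u g1 < of_rat q2"
    using g1'g1 by auto
  moreover have "d h g1 \<le> d h h' + d h' g1' + d g1' g1"
    using Metric_space.triangle[OF assms(1)] assms(3,6,8) \<open>h \<in> P\<close> \<open>h' \<in> D\<close> \<open>g1' \<in> D\<close> \<open>g1 \<in> W\<close>
    by (smt (verit) subsetD)
  then have "d h g1 < of_rat \<epsilon>"
    using hh' h'g1' g1'g1 by (simp add: of_rat_divide)
  ultimately show "\<exists>q1 q2 :: rat. \<exists>g1\<in>W. \<exists>m n :: nat.
             0 < q2 \<and> q2 < q1 \<and> q1 < q0 \<and> q0 < 1 \<and> d h g1 < of_rat \<epsilon> \<and>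
             F (s @ [q0, q1, q2, 1, of_nat m, of_nat n]) g1 < of_rat q2"
    using q \<open>g1 \<in> W\<close> unfolding u_def by blast
qed

lemma X_cond1_gact: "X_cond1 (gact G g F) P \<longleftrightarrow> X_cond1 F ((\<lambda>x. x \<otimes>\<^bsub>G\<^esub> g) ` P)"
  by (simp add: X_cond1_def gact_def)

lemma X_cond2_gact: "X_cond2 (gact G g F) P \<longleftrightarrow> X_cond2 F ((\<lambda>x. x \<otimes>\<^bsub>G\<^esub> g) ` P)"
  by (simp add: X_cond2_def gact_def)

lemma X_cond3_gact:
  assumes "right_invariant G d" and "g \<in> carrier G" and "P \<subseteq> carrier G" and "W \<subseteq> carrier G"
  shows "X_cond3 d (gact G g F) P W \<longleftrightarrow>
           X_cond3 d F ((\<lambda>x. x \<otimes>\<^bsub>G\<^esub> g) ` P) ((\<lambda>x. x \<otimes>\<^bsub>G\<^esub> g) ` W)"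
proof -
  have "\<And>x y. x \<in> P \<Longrightarrow> y \<in> W \<Longrightarrow> d (x \<otimes>\<^bsub>G\<^esub> g) (y \<otimes>\<^bsub>G\<^esub> g) = d x y"
    using assms unfolding right_invariant_def by blast
  then show ?thesis
    unfolding X_cond3_def gact_def by (simp cong: bex_cong)
qed

theorem lemma2p2:
  fixes G :: "('a, 'b) monoid_scheme" and d :: "'a \<Rightarrow> 'a \<Rightarrow> real" and G0 :: "'a set"
  assumes "Polish_group_metric G d"
    and "right_invariant G d"
    and "bounded_by_one G d"
    and "countable_dense_subgroup G d G0"
    and "F \<in> Xset G d G0"
    and "g \<in> carrier G"
  shows "gact G g F \<in> Xset G d G0"
proof -
  have grp: "group G" and metric: "Metric_space (carrier G) d"
    using assms(1) unfolding Polish_group_metric_def by auto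
  have G0: "G0 \<subseteq> carrier G" "mdense_in d (carrier G) G0"
    using assms(4) countable_dense_subgroup_mdense_in[OF assms(4) metric]
    unfolding countable_dense_subgroup_def by (auto dest: subgroup.subset)
  define G0g where "G0g = (\<lambda>x. x \<otimes>\<^bsub>G\<^esub> g) ` G0"
  have G0g: "G0g \<subseteq> carrier G" "mdense_in d (carrier G) G0g"
    using G0 mdense_in_right_translate[OF grp assms(2,6)] assms(6) grp
    unfolding G0g_def by (auto intro: monoid.m_closed group.is_monoid)
  have Lip: "\<And>s. Lip1 G d (F s)" and "X_cond1 F G0" "X_cond2 F G0" "X_cond3 d F G0 G0"
    using assms(5) unfolding Xset_eq by auto
  then have "X_cond1 F G0g" "X_cond2 F G0g" "X_cond3 d F G0g G0g"
    using X_cond1_extend X_cond2_extend X_cond3_extend[OF metric] G0 G0g by metis+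
  moreover have "\<And>s. Lip1 G d (gact G g F s)"
    using Lip1_right_translate[OF grp assms(2,6) Lip] unfolding gact_def .
  ultimately show ?thesis
    unfolding Xset_eq G0g_def
    by (simp add: X_cond1_gact X_cond2_gact X_cond3_gact[OF assms(2,6) G0(1) G0(1)])
qed

end
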